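(* Let $b,c\in\mathbb{N}$ and $n,m\ge 1$. Consider the generalized OK Corral Pólya–Eggenberger urn with ball transition matrix $\begin{pmatrix}0&-b\\-c&0\end{pmatrix}$ started with $c n$ white and $b m$ black balls, and let $Y_{cn,bm}$ be the number of white balls remaining when the process stops. Then for $1\le k\le n$, \[ \mathbb{P}\{Y_{cn,bm}=ck\}=\frac{k}{(n-k+1)!\,(m-1)!}\frac{b^{n-k}}{c^{n-k}}\sum_{l=1}^{m}(-1)^{m-l}\frac{\binom{m-1}{l-1}}{\binom{n+\frac{b}{c}l}{n-k+1}}\,l^{n+m-1-k} =\frac{k}{(n-k)!\,m!}\frac{c^{m}}{b^{m}}\sum_{l=0}^{n}(-1)^{n-l}\frac{\binom{n-k}{l-k}}{\binom{m+\frac{cl}{b}}{m}}\,l^{m+n-1-k}, \] and \[ \mathbb{P}\{Y_{cn,bm}=0\}=\frac{1}{n!\,(m-1)!}\frac{b^{n}}{c^{n}}\sum_{l=1}^{m}(-1)^{m-l}\frac{\binom{m-1}{l-1}}{\binom{n+\frac{b}{c}l}{n}}\,l^{n+m-1}. \]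
   Context: The urn: at each step one ball is drawn uniformly at random among all balls present and returned; if it is white, $b$ black balls are removed; if it is black, $c$ white balls are removed (so from $cn'$ white and $bm'$ black balls, the number of white balls decreases by $c$ with probability $bm'/(cn'+bm')$ and the number of black balls decreases by $b$ with probability $cn'/(cn'+bm')$). The process stops as soon as the urn contains no white or no black balls; $Y_{cn,bm}$ is the number of white balls at that time ($0$ if whites are exhausted first). For real $x$ and integer $k\ge0$, $\binom{x}{k}=x(x-1)\cdots(x-k+1)/k!$, and $\binom{x}{k}=0$ for negative integers $k$. *)

theory Defs
  imports Complex_Main
begin

text \<open>urnY b c n m y: probability that the generalized OK Corral urn, started with
  c*n white and b*m black balls, stops with exactly y white balls.\<close>
fun urnY :: "nat \<Rightarrow> nat \<Rightarrow> nat \<Rightarrow> nat \<Rightarrow> nat \<Rightarrow> real" where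
  "urnY b c 0 m y = (if y = 0 then 1 else 0)"
| "urnY b c (Suc n) 0 y = (if y = c * Suc n then 1 else 0)"
| "urnY b c (Suc n) (Suc m) y =
     (let W = real (c * Suc n); B = real (b * Suc m) in
        B / (W + B) * urnY b c n (Suc m) y + W / (W + B) * urnY b c (Suc n) m y)"

end

theory Submission
  imports Defs
begin

text \<open>Conditioning on the first draw, both \<open>P{Y = c k}\<close> and \<open>P{Y = 0}\<close>, as functions of
  \<open>(n, m)\<close>, satisfy \<open>(n + r m) f(n, m) = r m f(n-1, m) + n f(n, m-1)\<close> with \<open>r = b/c\<close>, and this
  recurrence determines them from their values at the corner \<open>(k, 1)\<close> resp. on the edge
  \<open>n = 0\<close>. So it suffices to check that the closed forms satisfy the same recurrence and
  boundary values. Writing the binomial coefficients in the denominators as Pochhammer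
  symbols, the recurrence holds term by term after splitting the factor \<open>n + r m\<close>; what is left
  over are alternating sums \<open>\<Sum>j. (-1)^j (N choose j) (j + a)^d\<close>, i.e. \<open>N\<close>-th finite differences of
  a polynomial of degree \<open>d\<close>, which vanish for \<open>d < N\<close> and equal \<open>(-1)^N N!\<close> for \<open>d = N\<close>.\<close>

section \<open>Finite differences of powers\<close>

definition alt_power_sum :: "nat \<Rightarrow> nat \<Rightarrow> 'a::comm_ring_1 \<Rightarrow> 'a" where
  "alt_power_sum N d a = (\<Sum>j\<le>N. (-1)^j * of_nat (N choose j) * (of_nat j + a)^d)"

lemma alt_power_sum_Suc_diff:
  "alt_power_sum (Suc N) d a = alt_power_sum N d a - alt_power_sum N d (a + 1)"
proof -
  define h where "h j = (-1)^j * of_nat (N choose j) * (of_nat j + a)^d" for j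
  define h' where "h' j = (-1)^j * of_nat (N choose j) * (of_nat (Suc j) + a)^d" for j
  have "alt_power_sum (Suc N) d a
      = a^d + (\<Sum>j\<le>N. (-1)^Suc j * of_nat (Suc N choose Suc j) * (of_nat (Suc j) + a)^d)"
    unfolding alt_power_sum_def by (subst sum.atMost_Suc_shift) simp
  also have "\<dots> = a^d + (\<Sum>j\<le>N. h (Suc j) - h' j)"
    by (intro arg_cong2[where f = "(+)"] sum.cong refl) (simp add: h_def h'_def algebra_simps)
  also have "\<dots> = a^d + (\<Sum>j\<le>N. h (Suc j)) - (\<Sum>j\<le>N. h' j)"
    by (simp add: sum_subtractf)
  also have "a^d + (\<Sum>j\<le>N. h (Suc j)) = (\<Sum>j\<le>Suc N. h j)"
    by (subst sum.atMost_Suc_shift) (simp add: h_def)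
  also have "\<dots> = alt_power_sum N d a"
    by (simp add: h_def alt_power_sum_def binomial_eq_0)
  also have "(\<Sum>j\<le>N. h' j) = alt_power_sum N d (a + 1)"
    by (simp add: h'_def alt_power_sum_def add_ac)
  finally show ?thesis .
qed

lemma alt_power_sum_shift:
  "alt_power_sum N d (a + 1) = (\<Sum>i\<le>d. of_nat (d choose i) * alt_power_sum N i a)"
proof -
  have binomial: "(of_nat j + (a + 1))^d = (\<Sum>i\<le>d. of_nat (d choose i) * (of_nat j + a)^i)" for j
    using binomial_ring[of "of_nat j + a" 1 d] by (simp add: add.assoc mult_ac)
  have "alt_power_sum N d (a + 1)
      = (\<Sum>j\<le>N. (-1)^j * of_nat (N choose j) * (\<Sum>i\<le>d. of_nat (d choose i) * (of_nat j + a)^i))"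
    unfolding alt_power_sum_def
    by (simp add: binomial)
  also have "\<dots> = (\<Sum>i\<le>d. of_nat (d choose i) * alt_power_sum N i a)"
    unfolding alt_power_sum_def
    by (simp add: sum_distrib_left sum_distrib_right mult_ac sum.swap[of _ "{..N}"])
  finally show ?thesis .
qed

lemma alt_power_sum_Suc:
  "alt_power_sum (Suc N) d a = - (\<Sum>i<d. of_nat (d choose i) * alt_power_sum N i a)"
  by (simp add: alt_power_sum_Suc_diff alt_power_sum_shift lessThan_Suc_atMost[symmetric])

lemma alt_power_sum_eq_0: "d < N \<Longrightarrow> alt_power_sum N d a = 0"
  by (induction N arbitrary: d a) (simp_all add: alt_power_sum_Suc)

lemma alt_power_sum_diag: "alt_power_sum N N a = (-1)^N * fact N"
proof (induction N arbitrary: a)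
  case 0
  then show ?case by (simp add: alt_power_sum_def)
next
  case (Suc N)
  have "alt_power_sum (Suc N) (Suc N) a = - (of_nat (Suc N) * alt_power_sum N N a)"
    by (simp add: alt_power_sum_Suc alt_power_sum_eq_0)
  then show ?case using Suc by (simp add: algebra_simps)
qed

lemma alternating_factorial_sum:
  assumes "k \<le> n"
  shows "(\<Sum>l=k..n. (-1)^(n-l) * real l ^ d / (fact (l-k) * fact (n-l)))
       = (-1)^(n-k) * alt_power_sum (n-k) d (real k) / fact (n-k)"
proof -
  have sign: "(-1::real)^(N-j) = (-1)^N * (-1)^j" if "j \<le> N" for N j
  proof -
    have "(-1::real)^N = (-1)^(N-j) * (-1)^j"
      using that by (simp flip: power_add)
    then show ?thesis by (simp add: mult.assoc flip: power_mult_distrib)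
  qed
  have "(\<Sum>l=k..n. (-1)^(n-l) * real l ^ d / (fact (l-k) * fact (n-l)))
      = (\<Sum>j=0..n-k. (-1)^(n-(j+k)) * real (j+k) ^ d / (fact (j+k-k) * fact (n-(j+k))))"
    using sum.shift_bounds_cl_nat_ivl[of "\<lambda>l. (-1)^(n-l) * real l ^ d / (fact (l-k) * fact (n-l))" 0 k "n-k"]
      assms by simp
  also have "\<dots> = (\<Sum>j\<le>n-k. (-1)^(n-k) / fact (n-k) * ((-1)^j * real (n-k choose j) * (real j + real k)^d))"
  proof (rule sum.cong)
    fix j assume "j \<in> {..n-k}"
    then have j: "j \<le> n - k" and idx: "n - (j + k) = n - k - j" by auto
    show "(-1)^(n-(j+k)) * real (j+k) ^ d / (fact (j+k-k) * fact (n-(j+k)))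
        = (-1)^(n-k) / fact (n-k) * ((-1)^j * real (n-k choose j) * (real j + real k)^d)"
      unfolding idx sign[OF j] binomial_fact[OF j] by simp
  qed (simp add: atLeast0AtMost)
  finally show ?thesis
    by (simp add: alt_power_sum_def sum_distrib_left sum_divide_distrib)
qed

lemma alternating_factorial_sum_eq_0:
  "k \<le> n \<Longrightarrow> d < n - k \<Longrightarrow> (\<Sum>l=k..n. (-1)^(n-l) * real l ^ d / (fact (l-k) * fact (n-l))) = 0"
  by (simp add: alternating_factorial_sum alt_power_sum_eq_0)

lemma alternating_factorial_sum_eq_1:
  "k \<le> n \<Longrightarrow> (\<Sum>l=k..n. (-1)^(n-l) * real l ^ (n-k) / (fact (l-k) * fact (n-l))) = 1"
  by (simp add: alternating_factorial_sum alt_power_sum_diag flip: power_add)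

section \<open>The closed forms\<close>

text \<open>\<open>black_sum (b/c) k k n m\<close> is the first closed form for \<open>P{Y = c k}\<close> divided by \<open>k\<close>, and
  \<open>black_sum (b/c) 0 1 n m\<close> the one for \<open>P{Y = 0}\<close>, once \<open>(n + r l) gchoose (n + 1 - s)\<close> is
  written as \<open>pochhammer (s + r l) (n + 1 - s) / (n + 1 - s)!\<close>. Likewise
  \<open>white_sum (c/b) k n m\<close> is the second closed form for \<open>P{Y = c k}\<close> divided by \<open>k\<close>.\<close>

definition black_term :: "real \<Rightarrow> nat \<Rightarrow> nat \<Rightarrow> nat \<Rightarrow> nat \<Rightarrow> nat \<Rightarrow> real" where
  "black_term r q s n m l = (-1)^(m-l) * real l ^ (n+m-1-q) * r^(n-q)
     / (fact (l-1) * fact (m-l) * pochhammer (real s + r * real l) (n+1-s))"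

definition black_sum :: "real \<Rightarrow> nat \<Rightarrow> nat \<Rightarrow> nat \<Rightarrow> nat \<Rightarrow> real" where
  "black_sum r q s n m = (\<Sum>l=1..m. black_term r q s n m l)"

lemma pochhammer_shifted_pos: "r > 0 \<Longrightarrow> 1 \<le> l \<Longrightarrow> pochhammer (real s + r * real l) N > 0"
  by (rule pochhammer_pos) (simp add: add_nonneg_pos)

lemma black_term_pred_n:
  assumes "q < n" "s \<le> n" "1 \<le> m" "1 \<le> l" "r > 0"
  shows "(real n + r * real l) / real l * black_term r q s n m l = r * black_term r q s (n-1) m l"
proof -
  obtain n' where n: "n = Suc n'" using assms by (cases n) auto
  define X where "X = (-1)^(m-l) * real l ^ (n'+m-1-q) * r^(n'-q)"
  define D where "D = fact (l-1) * fact (m-l) * pochhammer (real s + r * real l) (n'+1-s)"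
  define Q where "Q = real n + r * real l"
  have exp: "n+m-1-q = Suc (n'+m-1-q)" "r^(n-q) = r * r^(n'-q)" "n+1-s = Suc (n'+1-s)"
    using assms n by (simp_all add: Suc_diff_le)
  have "real s + r * real l + real (n'+1-s) = real n + r * real l"
    using assms n by simp
  then have "pochhammer (real s + r * real l) (n+1-s)
      = pochhammer (real s + r * real l) (n'+1-s) * (real n + r * real l)"
    by (simp only: exp pochhammer_Suc)
  then have term_n: "black_term r q s n m l = X * real l * r / (D * Q)"
    unfolding black_term_def X_def D_def Q_def exp by (simp add: field_simps)
  have term_pred: "black_term r q s (n-1) m l = X / D"
    unfolding black_term_def X_def D_def using n by simp
  have "D \<noteq> 0"
    using assms pochhammer_shifted_pos[of r l s "n'+1-s"] unfolding D_def by simp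
  moreover have "Q > 0" "real l > 0"
    using assms unfolding Q_def by (auto intro!: add_nonneg_pos)
  ultimately show ?thesis unfolding Q_def[symmetric] term_n term_pred by (simp add: field_simps)
qed

lemma black_term_pred_m:
  assumes "1 \<le> l" "l < m" "q \<le> n" "r > 0"
  shows "- (real m - real l) / real l * black_term r q s n m l = black_term r q s n (m-1) l"
proof -
  obtain m' where m: "m = Suc m'" using assms by (cases m) auto
  define X where "X = (-1)^(m'-l) * real l ^ (n+m'-1-q) * r^(n-q)"
  define D where "D = fact (l-1) * fact (m'-l) * pochhammer (real s + r * real l) (n+1-s)"
  have exp: "n+m-1-q = Suc (n+m'-1-q)" "m-l = Suc (m'-l)" "real (Suc (m'-l)) = real m - real l"
    using assms m by simp_all
  then have term_m: "black_term r q s n m l = - X * real l / ((real m - real l) * D)"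
    unfolding black_term_def X_def D_def exp(1,2) fact_Suc exp(3) by (simp add: field_simps)
  have term_pred: "black_term r q s n (m-1) l = X / D"
    unfolding black_term_def X_def D_def using m by simp
  have "D \<noteq> 0" "real m - real l \<noteq> 0" "real l \<noteq> 0"
    using assms pochhammer_shifted_pos[of r l s "n+1-s"] unfolding D_def by auto
  then show ?thesis unfolding term_m term_pred by (simp add: field_simps)
qed

text \<open>Each term is split along \<open>n + r m = m (n + r l) / l - n (m - l) / l\<close>.\<close>

lemma black_sum_decompose:
  assumes "1 \<le> m" "q \<le> n" "r > 0"
  shows "(real n + r * real m) * black_sum r q s n m
     = real m * (\<Sum>l=1..m. (real n + r * real l) / real l * black_term r q s n m l)
       + real n * black_sum r q s n (m-1)"
proof -
  have "(real n + r * real m) * black_sum r q s n m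
      = (\<Sum>l=1..m. real m * ((real n + r * real l) / real l * black_term r q s n m l)
           + real n * (- (real m - real l) / real l * black_term r q s n m l))"
    unfolding black_sum_def sum_distrib_left
    by (intro sum.cong refl) (auto simp: field_simps)
  also have "\<dots> = real m * (\<Sum>l=1..m. (real n + r * real l) / real l * black_term r q s n m l)
       + real n * (\<Sum>l=1..m. - (real m - real l) / real l * black_term r q s n m l)"
    by (simp only: sum.distrib sum_distrib_left)
  also have "(\<Sum>l=1..m. - (real m - real l) / real l * black_term r q s n m l)
      = (\<Sum>l=1..m-1. - (real m - real l) / real l * black_term r q s n m l)"
  proof -
    have "{1..m} = insert m {1..m-1}" "m \<notin> {1..m-1}" using assms by auto
    then show ?thesis by simp
  qed
  also have "\<dots> = black_sum r q s n (m-1)"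
    unfolding black_sum_def using assms by (intro sum.cong refl black_term_pred_m) auto
  finally show ?thesis .
qed

lemma black_sum_recurrence:
  assumes "q < n" "s \<le> n" "1 \<le> m" "r > 0"
  shows "(real n + r * real m) * black_sum r q s n m
    = r * real m * black_sum r q s (n-1) m + real n * black_sum r q s n (m-1)"
proof -
  have "(\<Sum>l=1..m. (real n + r * real l) / real l * black_term r q s n m l)
      = r * black_sum r q s (n-1) m"
    unfolding black_sum_def sum_distrib_left
    using assms by (intro sum.cong refl black_term_pred_n) auto
  then show ?thesis
    using assms by (simp add: black_sum_decompose)
qed

lemma black_sum_recurrence_diag:
  assumes "1 \<le> k" "2 \<le> m" "r > 0"
  shows "(real k + r * real m) * black_sum r k k k m = real k * black_sum r k k k (m-1)"
proof -
  \<comment> \<open>At \<open>n = k\<close> the Pochhammer factor is just \<open>k + r l\<close>, so the first sum of the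
    decomposition degenerates to a finite difference of order \<open>m - 1\<close> of a power of degree \<open>m - 2\<close>.\<close>
  have "(\<Sum>l=1..m. (real k + r * real l) / real l * black_term r k k k m l)
      = (\<Sum>l=1..m. (-1)^(m-l) * real l ^ (m-2) / (fact (l-1) * fact (m-l)))"
  proof (rule sum.cong)
    fix l assume "l \<in> {1..m}"
    define Q where "Q = real k + r * real l"
    have "Q \<noteq> 0" "real l \<noteq> 0"
      using \<open>l \<in> {1..m}\<close> assms unfolding Q_def by (auto intro!: add_nonneg_pos less_imp_neq[symmetric])
    moreover have "k+m-1-k = Suc (m-2)" using assms by simp
    then have "black_term r k k k m l = (-1)^(m-l) * real l * real l ^ (m-2) / (fact (l-1) * fact (m-l) * Q)"
      unfolding black_term_def Q_def by simp
    ultimately show "(real k + r * real l) / real l * black_term r k k k m l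
        = (-1)^(m-l) * real l ^ (m-2) / (fact (l-1) * fact (m-l))"
      unfolding Q_def[symmetric] by (simp add: field_simps)
  qed simp
  also have "\<dots> = 0"
    using assms by (intro alternating_factorial_sum_eq_0) auto
  finally show ?thesis
    using assms by (simp add: black_sum_decompose)
qed

lemma black_sum_diag_one: "black_sum r k k k 1 = 1 / (real k + r)"
  by (simp add: black_sum_def black_term_def)

lemma black_sum_zero_white: "1 \<le> m \<Longrightarrow> black_sum r 0 1 0 m = 1"
  using alternating_factorial_sum_eq_1[of 1 m]
  by (simp add: black_sum_def black_term_def)

lemma black_sum_eq_gchoose:
  assumes "r > 0" "s \<le> n + 1"
  shows "1 / (fact (n+1-s) * fact (m-1)) * r^(n-q)
        * (\<Sum>l=1..m. (-1)^(m-l) * (real ((m-1) choose (l-1)) / ((real n + r * real l) gchoose (n+1-s)))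
            * real l ^ (n+m-1-q))
       = black_sum r q s n m"
  unfolding black_sum_def sum_distrib_left
proof (rule sum.cong)
  fix l assume l: "l \<in> {1..m}"
  have shift: "real n + r * real l - real (n+1-s) + 1 = real s + r * real l"
    using assms by simp
  have gch: "(real n + r * real l) gchoose (n+1-s) = pochhammer (real s + r * real l) (n+1-s) / fact (n+1-s)"
    by (simp only: gbinomial_pochhammer' shift)
  have "l - 1 \<le> m - 1" "m - 1 - (l - 1) = m - l" using l by auto
  then have ch: "real ((m-1) choose (l-1)) = fact (m-1) / (fact (l-1) * fact (m-l))"
    by (metis binomial_fact)
  have "pochhammer (real s + r * real l) (n+1-s) > 0" using l assms pochhammer_shifted_pos by auto
  then show "1 / (fact (n+1-s) * fact (m-1)) * r^(n-q)
        * ((-1)^(m-l) * (real ((m-1) choose (l-1)) / ((real n + r * real l) gchoose (n+1-s)))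
            * real l ^ (n+m-1-q))
       = black_term r q s n m l"
    unfolding black_term_def gch ch by (simp add: field_simps)
qed simp

definition white_term :: "real \<Rightarrow> nat \<Rightarrow> nat \<Rightarrow> nat \<Rightarrow> nat \<Rightarrow> real" where
  "white_term \<rho> k n m l = (-1)^(n-l) * real l ^ (m+n-1-k) * \<rho>^m
     / (fact (l-k) * fact (n-l) * pochhammer (\<rho> * real l + 1) m)"

definition white_sum :: "real \<Rightarrow> nat \<Rightarrow> nat \<Rightarrow> nat \<Rightarrow> real" where
  "white_sum \<rho> k n m = (\<Sum>l=k..n. white_term \<rho> k n m l)"

lemma pochhammer_scaled_pos: "\<rho> \<ge> 0 \<Longrightarrow> pochhammer (\<rho> * real l + 1) m > 0"
  by (intro pochhammer_pos add_nonneg_pos) auto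

lemma white_term_pred_n:
  assumes "1 \<le> k" "k \<le> l" "l < n" "1 \<le> m" "\<rho> > 0"
  shows "- (real n - real l) / real l * white_term \<rho> k n m l = white_term \<rho> k (n-1) m l"
proof -
  obtain n' where n: "n = Suc n'" using assms by (cases n) auto
  define X where "X = (-1)^(n'-l) * real l ^ (m+n'-1-k) * \<rho>^m"
  define D where "D = fact (l-k) * fact (n'-l) * pochhammer (\<rho> * real l + 1) m"
  have exp: "m+n-1-k = Suc (m+n'-1-k)" "n-l = Suc (n'-l)" "real (Suc (n'-l)) = real n - real l"
    using assms n by simp_all
  then have term_n: "white_term \<rho> k n m l = - X * real l / ((real n - real l) * D)"
    unfolding white_term_def X_def D_def exp(1,2) fact_Suc exp(3) by (simp add: field_simps)
  have term_pred: "white_term \<rho> k (n-1) m l = X / D"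
    unfolding white_term_def X_def D_def using n by simp
  have "D \<noteq> 0" "real n - real l \<noteq> 0" "real l \<noteq> 0"
    using assms pochhammer_scaled_pos[of \<rho> l m] unfolding D_def by auto
  then show ?thesis unfolding term_n term_pred by (simp add: field_simps)
qed

lemma white_term_pred_m:
  assumes "1 \<le> k" "k \<le> l" "l \<le> n" "1 \<le> m" "k < n \<or> 2 \<le> m" "\<rho> > 0"
  shows "(real l + real m / \<rho>) / real l * white_term \<rho> k n m l = white_term \<rho> k n (m-1) l"
proof -
  obtain m' where m: "m = Suc m'" using assms by (cases m) auto
  define X where "X = (-1)^(n-l) * real l ^ (m'+n-1-k) * \<rho>^m'"
  define D where "D = fact (l-k) * fact (n-l) * pochhammer (\<rho> * real l + 1) m'"
  define Q where "Q = \<rho> * real l + real m"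
  have "Suc m'+n-1-k = Suc (m'+n-1-k)" "\<rho> * real l + 1 + real m' = Q"
    using assms m unfolding Q_def by auto
  then have term_m: "white_term \<rho> k n m l = X * real l * \<rho> / (D * Q)"
    unfolding white_term_def X_def D_def m pochhammer_Suc by (simp add: field_simps)
  have term_pred: "white_term \<rho> k n (m-1) l = X / D"
    unfolding white_term_def X_def D_def using m by simp
  have "real l + real m / \<rho> = Q / \<rho>" unfolding Q_def using assms by (simp add: field_simps)
  moreover have "D \<noteq> 0" "Q \<noteq> 0" "real l \<noteq> 0"
    using assms pochhammer_scaled_pos[of \<rho> l m'] unfolding D_def Q_def
    by (auto intro!: add_pos_nonneg less_imp_neq[symmetric])
  ultimately show ?thesis unfolding term_m term_pred using assms by (simp add: field_simps)
qed

text \<open>Here the split is \<open>n + m/\<rho> = - (m/\<rho>) (n - l) / l + n (l + m/\<rho>) / l\<close>.\<close>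

lemma white_sum_recurrence:
  assumes "1 \<le> k" "k \<le> n" "1 \<le> m" "k < n \<or> 2 \<le> m" "\<rho> > 0"
  shows "(real n + real m / \<rho>) * white_sum \<rho> k n m
    = real m / \<rho> * white_sum \<rho> k (n-1) m + real n * white_sum \<rho> k n (m-1)"
proof -
  have "(real n + real m / \<rho>) * white_sum \<rho> k n m
      = (\<Sum>l=k..n. real m / \<rho> * (- (real n - real l) / real l * white_term \<rho> k n m l)
          + real n * ((real l + real m / \<rho>) / real l * white_term \<rho> k n m l))"
    unfolding white_sum_def sum_distrib_left
    using assms by (intro sum.cong refl) (auto simp: field_simps)
  also have "\<dots> = real m / \<rho> * (\<Sum>l=k..n. - (real n - real l) / real l * white_term \<rho> k n m l)
        + real n * (\<Sum>l=k..n. (real l + real m / \<rho>) / real l * white_term \<rho> k n m l)"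
    by (simp only: sum.distrib sum_distrib_left)
  also have "(\<Sum>l=k..n. - (real n - real l) / real l * white_term \<rho> k n m l)
      = (\<Sum>l=k..n-1. - (real n - real l) / real l * white_term \<rho> k n m l)"
  proof -
    have "{k..n} = insert n {k..n-1}" "n \<notin> {k..n-1}" using assms by auto
    then show ?thesis by simp
  qed
  also have "\<dots> = white_sum \<rho> k (n-1) m"
    unfolding white_sum_def using assms by (intro sum.cong refl white_term_pred_n) auto
  also have "(\<Sum>l=k..n. (real l + real m / \<rho>) / real l * white_term \<rho> k n m l) = white_sum \<rho> k n (m-1)"
    unfolding white_sum_def using assms by (intro sum.cong refl white_term_pred_m) auto
  finally show ?thesis .
qed

lemma white_sum_no_black: "1 \<le> k \<Longrightarrow> k < n \<Longrightarrow> white_sum \<rho> k n 0 = 0"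
  using alternating_factorial_sum_eq_0[of k n "n-1-k"]
  by (simp add: white_sum_def white_term_def)

lemma white_sum_diag_one: "white_sum \<rho> k k 1 = \<rho> / (\<rho> * real k + 1)"
  by (simp add: white_sum_def white_term_def)

lemma white_sum_eq_gchoose:
  assumes "\<rho> > 0" "k \<le> n"
  shows "1 / (fact (n-k) * fact m) * \<rho>^m
        * (\<Sum>l=0..n. (-1)^(n-l) * ((if l < k then 0 else real ((n-k) choose (l-k)))
            / ((real m + \<rho> * real l) gchoose m)) * real l ^ (m+n-1-k))
       = white_sum \<rho> k n m"
proof -
  have "(\<Sum>l=0..n. (-1)^(n-l) * ((if l < k then 0 else real ((n-k) choose (l-k)))
            / ((real m + \<rho> * real l) gchoose m)) * real l ^ (m+n-1-k))
      = (\<Sum>l=k..n. (-1)^(n-l) * ((if l < k then 0 else real ((n-k) choose (l-k)))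
            / ((real m + \<rho> * real l) gchoose m)) * real l ^ (m+n-1-k))"
    by (rule sum.mono_neutral_right) auto
  also have "1 / (fact (n-k) * fact m) * \<rho>^m * \<dots> = white_sum \<rho> k n m"
    unfolding white_sum_def sum_distrib_left
  proof (rule sum.cong)
    fix l assume l: "l \<in> {k..n}"
    have gch: "(real m + \<rho> * real l) gchoose m = pochhammer (\<rho> * real l + 1) m / fact m"
      by (simp add: gbinomial_pochhammer')
    have "l - k \<le> n - k" "n - k - (l - k) = n - l" using l by auto
    then have ch: "real ((n-k) choose (l-k)) = fact (n-k) / (fact (l-k) * fact (n-l))"
      by (metis binomial_fact)
    have "pochhammer (\<rho> * real l + 1) m > 0" using assms by (intro pochhammer_scaled_pos) auto
    then show "1 / (fact (n-k) * fact m) * \<rho>^m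
        * ((-1)^(n-l) * ((if l < k then 0 else real ((n-k) choose (l-k)))
            / ((real m + \<rho> * real l) gchoose m)) * real l ^ (m+n-1-k))
       = white_term \<rho> k n m l"
      using l unfolding white_term_def gch ch by (simp add: field_simps)
  qed simp
  finally show ?thesis .
qed

section \<open>The urn\<close>

lemma urnY_recurrence:
  assumes "1 \<le> c" "1 \<le> n" "1 \<le> m"
  shows "(real n + real b / real c * real m) * urnY b c n m y
       = real b / real c * real m * urnY b c (n-1) m y + real n * urnY b c n (m-1) y"
proof -
  obtain n' m' where n: "n = Suc n'" and m: "m = Suc m'" using assms by (cases n; cases m) auto
  define W where "W = real (c * n)"
  define B where "B = real (b * m)"
  have step: "urnY b c n m y = B / (W + B) * urnY b c (n-1) m y + W / (W + B) * urnY b c n (m-1) y"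
    unfolding n m W_def B_def by (simp add: Let_def)
  have scale: "real n + real b / real c * real m = (W + B) / real c"
    using assms unfolding W_def B_def by (simp add: field_simps)
  have "W + B > 0"
    using assms unfolding W_def B_def by (auto intro!: add_pos_nonneg)
  then have "(W + B) / real c * urnY b c n m y
      = (W + B) / real c * ((B * urnY b c (n-1) m y + W * urnY b c n (m-1) y) / (W + B))"
    unfolding step by (simp add: add_divide_distrib)
  also have "\<dots> = (B * urnY b c (n-1) m y + W * urnY b c n (m-1) y) / real c"
    using \<open>W + B > 0\<close> by simp
  finally have "(W + B) / real c * urnY b c n m y
      = (B * urnY b c (n-1) m y + W * urnY b c n (m-1) y) / real c" .
  then show ?thesis
    using assms unfolding scale by (simp add: W_def B_def add_divide_distrib)
qed

lemma urnY_eq_0_if_greater: "c * n < y \<Longrightarrow> urnY b c n m y = 0"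
  by (induction b c n m y rule: urnY.induct) (auto simp: Let_def)

lemma urnY_no_black: "1 \<le> n \<Longrightarrow> urnY b c n 0 y = (if y = c * n then 1 else 0)"
  by (cases n) auto

text \<open>A solution of the urn recurrence on \<open>{k..} \<times> {1..}\<close>, with values outside that quadrant
  read as \<open>0\<close>, is determined by its values on the set \<open>base\<close>.\<close>

lemma urn_recurrence_unique:
  fixes f g :: "nat \<Rightarrow> nat \<Rightarrow> real"
  assumes "r > 0"
    and rec_f: "\<And>n m. k \<le> n \<Longrightarrow> 1 \<le> m \<Longrightarrow> \<not> base n m \<Longrightarrow> (real n + r * real m) * f n m
       = r * real m * (if n = k then 0 else f (n-1) m) + real n * (if m = 1 then 0 else f n (m-1))"
    and rec_g: "\<And>n m. k \<le> n \<Longrightarrow> 1 \<le> m \<Longrightarrow> \<not> base n m \<Longrightarrow> (real n + r * real m) * g n m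
       = r * real m * (if n = k then 0 else g (n-1) m) + real n * (if m = 1 then 0 else g n (m-1))"
    and base: "\<And>n m. k \<le> n \<Longrightarrow> 1 \<le> m \<Longrightarrow> base n m \<Longrightarrow> f n m = g n m"
  shows "k \<le> n \<Longrightarrow> 1 \<le> m \<Longrightarrow> f n m = g n m"
proof (induction "n + m" arbitrary: n m rule: less_induct)
  case less
  show ?case
  proof (cases "base n m")
    case False
    have "real n + r * real m > 0" using less \<open>r > 0\<close> by (auto intro!: add_nonneg_pos)
    moreover have "(if n = k then 0 else f (n-1) m) = (if n = k then 0 else g (n-1) m)"
      and "(if m = 1 then 0 else f n (m-1)) = (if m = 1 then 0 else g n (m-1))"
      using less by auto
    then have "(real n + r * real m) * f n m = (real n + r * real m) * g n m"
      using rec_f[OF less(2,3) False] rec_g[OF less(2,3) False] by simp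
    ultimately show ?thesis by simp
  qed (use base less in blast)
qed

lemma urnY_white_recurrence:
  assumes "1 \<le> c" "1 \<le> k" "k \<le> n" "1 \<le> m" "(n, m) \<noteq> (k, 1)"
  shows "(real n + real b / real c * real m) * urnY b c n m (c*k)
    = real b / real c * real m * (if n = k then 0 else urnY b c (n-1) m (c*k))
      + real n * (if m = 1 then 0 else urnY b c n (m-1) (c*k))"
proof -
  have "urnY b c (n-1) m (c*k) = 0" if "n = k"
    using that assms by (intro urnY_eq_0_if_greater) simp
  moreover have "urnY b c n (m-1) (c*k) = 0" if "m = 1"
    using that assms urnY_no_black[of n b c "c*k"] by auto
  ultimately show ?thesis
    using urnY_recurrence[of c n m b "c*k"] assms by auto
qed

lemma urnY_white_diag_one:
  assumes "1 \<le> b" "1 \<le> c" "1 \<le> k"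
  shows "urnY b c k 1 (c*k) = real k / (real k + real b / real c)"
proof -
  have "urnY b c (k-1) 1 (c*k) = 0" using assms by (intro urnY_eq_0_if_greater) simp
  moreover have "urnY b c k 0 (c*k) = 1" using urnY_no_black[of k b c "c*k"] assms by simp
  ultimately have "(real k + real b / real c) * urnY b c k 1 (c*k) = real k"
    using urnY_recurrence[of c k 1 b "c*k"] assms by simp
  moreover have "real k + real b / real c > 0" using assms by (auto intro!: add_pos_nonneg)
  ultimately show ?thesis by (simp add: field_simps)
qed

lemma urnY_white_eq_black_sum:
  assumes "1 \<le> b" "1 \<le> c" "1 \<le> k" "k \<le> n" "1 \<le> m"
  shows "urnY b c n m (c*k) = real k * black_sum (real b / real c) k k n m"
proof -
  define r where "r = real b / real c"
  have r: "r > 0" using assms unfolding r_def by simp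
  have "urnY b c n m (c*k) = real k * black_sum r k k n m"
  proof (rule urn_recurrence_unique[OF r, where base = "\<lambda>n m. n = k \<and> m = 1"])
    fix n m :: nat assume "k \<le> n" "1 \<le> m" "\<not> (n = k \<and> m = 1)"
    then show "(real n + r * real m) * urnY b c n m (c*k)
      = r * real m * (if n = k then 0 else urnY b c (n-1) m (c*k))
        + real n * (if m = 1 then 0 else urnY b c n (m-1) (c*k))"
      unfolding r_def using assms by (intro urnY_white_recurrence) auto
  next
    fix n m :: nat assume nm: "k \<le> n" "1 \<le> m" "\<not> (n = k \<and> m = 1)"
    show "(real n + r * real m) * (real k * black_sum r k k n m)
      = r * real m * (if n = k then 0 else real k * black_sum r k k (n-1) m)
        + real n * (if m = 1 then 0 else real k * black_sum r k k n (m-1))"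
    proof (cases "n = k")
      case True
      with nm have "2 \<le> m" by auto
      with True show ?thesis
        using black_sum_recurrence_diag[of k m r] assms(3) r by (simp add: algebra_simps)
    next
      case False
      with nm have "k < n" by simp
      with nm False show ?thesis
        using black_sum_recurrence[of k n k m r] r by (auto simp: algebra_simps black_sum_def)
    qed
  next
    fix n m :: nat assume "k \<le> n" "1 \<le> m" "n = k \<and> m = 1"
    then show "urnY b c n m (c*k) = real k * black_sum r k k n m"
      using urnY_white_diag_one[OF assms(1-3)] black_sum_diag_one unfolding r_def by simp
  qed (use assms in auto)
  then show ?thesis unfolding r_def .
qed

lemma urnY_white_eq_white_sum:
  assumes "1 \<le> b" "1 \<le> c" "1 \<le> k" "k \<le> n" "1 \<le> m"
  shows "urnY b c n m (c*k) = real k * white_sum (real c / real b) k n m"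
proof -
  define r where "r = real b / real c"
  define \<rho> where "\<rho> = real c / real b"
  have r: "r > 0" and \<rho>: "\<rho> > 0" and r_\<rho>: "real m / \<rho> = r * real m" for m
    using assms unfolding r_def \<rho>_def by auto
  have "urnY b c n m (c*k) = real k * white_sum \<rho> k n m"
  proof (rule urn_recurrence_unique[OF r, where base = "\<lambda>n m. n = k \<and> m = 1"])
    fix n m :: nat assume "k \<le> n" "1 \<le> m" "\<not> (n = k \<and> m = 1)"
    then show "(real n + r * real m) * urnY b c n m (c*k)
      = r * real m * (if n = k then 0 else urnY b c (n-1) m (c*k))
        + real n * (if m = 1 then 0 else urnY b c n (m-1) (c*k))"
      unfolding r_def using assms by (intro urnY_white_recurrence) auto
  next
    fix n m :: nat assume nm: "k \<le> n" "1 \<le> m" "\<not> (n = k \<and> m = 1)"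
    have "white_sum \<rho> k (n-1) m = 0" if "n = k"
      using that assms by (simp add: white_sum_def)
    moreover have "white_sum \<rho> k n (m-1) = 0" if "m = 1"
      using that nm assms white_sum_no_black[of k n \<rho>] by auto
    moreover have "(real n + r * real m) * white_sum \<rho> k n m
        = r * real m * white_sum \<rho> k (n-1) m + real n * white_sum \<rho> k n (m-1)"
      using white_sum_recurrence[of k n m \<rho>] nm assms \<rho> unfolding r_\<rho> by auto
    ultimately show "(real n + r * real m) * (real k * white_sum \<rho> k n m)
      = r * real m * (if n = k then 0 else real k * white_sum \<rho> k (n-1) m)
        + real n * (if m = 1 then 0 else real k * white_sum \<rho> k n (m-1))"
      by (auto simp: algebra_simps)
  next
    fix n m :: nat assume "k \<le> n" "1 \<le> m" "n = k \<and> m = 1"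
    moreover have "\<rho> / (\<rho> * real k + 1) = 1 / (real k + r)"
      using assms unfolding r_def \<rho>_def by (simp add: field_simps)
    ultimately show "urnY b c n m (c*k) = real k * white_sum \<rho> k n m"
      using urnY_white_diag_one[OF assms(1-3)] white_sum_diag_one unfolding r_def by simp
  qed (use assms in auto)
  then show ?thesis unfolding \<rho>_def .
qed

lemma urnY_zero_eq_black_sum:
  assumes "1 \<le> b" "1 \<le> c" "1 \<le> m"
  shows "urnY b c n m 0 = black_sum (real b / real c) 0 1 n m"
proof -
  define r where "r = real b / real c"
  have r: "r > 0" using assms unfolding r_def by simp
  have "urnY b c n m 0 = black_sum r 0 1 n m"
  proof (rule urn_recurrence_unique[OF r, where k = 0 and base = "\<lambda>n m. n = 0"])
    fix n m :: nat assume nm: "0 \<le> n" "1 \<le> m" "\<not> n = 0"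
    have "urnY b c n (m-1) 0 = 0" if "m = 1"
      using that nm urnY_no_black[of n b c 0] assms by auto
    then show "(real n + r * real m) * urnY b c n m 0
      = r * real m * (if n = 0 then 0 else urnY b c (n-1) m 0)
        + real n * (if m = 1 then 0 else urnY b c n (m-1) 0)"
      using urnY_recurrence[of c n m b 0] nm assms unfolding r_def by auto
  next
    fix n m :: nat assume nm: "0 \<le> n" "1 \<le> m" "\<not> n = 0"
    then show "(real n + r * real m) * black_sum r 0 1 n m
      = r * real m * (if n = 0 then 0 else black_sum r 0 1 (n-1) m)
        + real n * (if m = 1 then 0 else black_sum r 0 1 n (m-1))"
      using black_sum_recurrence[of 0 n 1 m r] r by (auto simp: black_sum_def)
  next
    fix n m :: nat assume "0 \<le> n" "1 \<le> m" "n = 0"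
    then show "urnY b c n m 0 = black_sum r 0 1 n m"
      using black_sum_zero_white[of m r] by simp
  qed (use assms in auto)
  then show ?thesis unfolding r_def .
qed

theorem corollary2:
  fixes b c n m :: nat
  assumes "b \<ge> 1" and "c \<ge> 1" and "n \<ge> 1" and "m \<ge> 1"
  shows "(\<forall>k\<in>{1..n}.
            urnY b c n m (c * k)
              = real k / (fact (n - k + 1) * fact (m - 1))
                * (real b ^ (n - k) / real c ^ (n - k))
                * (\<Sum>l=1..m. (-1) ^ (m - l)
                     * (real ((m - 1) choose (l - 1))
                        / ((real n + real b / real c * real l) gchoose (n - k + 1)))
                     * real l ^ (n + m - 1 - k))
          \<and> real k / (fact (n - k + 1) * fact (m - 1))
                * (real b ^ (n - k) / real c ^ (n - k))
                * (\<Sum>l=1..m. (-1) ^ (m - l)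
                     * (real ((m - 1) choose (l - 1))
                        / ((real n + real b / real c * real l) gchoose (n - k + 1)))
                     * real l ^ (n + m - 1 - k))
              = real k / (fact (n - k) * fact m)
                * (real c ^ m / real b ^ m)
                * (\<Sum>l=0..n. (-1) ^ (n - l)
                     * ((if l < k then 0 else real ((n - k) choose (l - k)))
                        / ((real m + real c * real l / real b) gchoose m))
                     * real l ^ (m + n - 1 - k)))
         \<and> urnY b c n m 0
              = 1 / (fact n * fact (m - 1))
                * (real b ^ n / real c ^ n)
                * (\<Sum>l=1..m. (-1) ^ (m - l)
                     * (real ((m - 1) choose (l - 1))
                        / ((real n + real b / real c * real l) gchoose n))
                     * real l ^ (n + m - 1))"
proof -
  have r: "real b / real c > 0" and \<rho>: "real c / real b > 0" using assms by auto
  have black_form: "urnY b c n m (c * k)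
      = real k / (fact (n - k + 1) * fact (m - 1)) * (real b ^ (n - k) / real c ^ (n - k))
        * (\<Sum>l=1..m. (-1) ^ (m - l) * (real ((m - 1) choose (l - 1))
            / ((real n + real b / real c * real l) gchoose (n - k + 1))) * real l ^ (n + m - 1 - k))"
    if "k \<in> {1..n}" for k
    using that assms urnY_white_eq_black_sum[of b c k n m] black_sum_eq_gchoose[OF r, of k n m k, symmetric]
    by (simp add: power_divide Suc_diff_le mult.assoc)
  have white_form: "urnY b c n m (c * k)
      = real k / (fact (n - k) * fact m) * (real c ^ m / real b ^ m)
        * (\<Sum>l=0..n. (-1) ^ (n - l) * ((if l < k then 0 else real ((n - k) choose (l - k)))
            / ((real m + real c * real l / real b) gchoose m)) * real l ^ (m + n - 1 - k))"
    if "k \<in> {1..n}" for k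
    using that assms urnY_white_eq_white_sum[of b c k n m] white_sum_eq_gchoose[OF \<rho>, of k n m, symmetric]
    by (simp add: power_divide mult.assoc)
  have zero_form: "urnY b c n m 0
      = 1 / (fact n * fact (m - 1)) * (real b ^ n / real c ^ n)
        * (\<Sum>l=1..m. (-1) ^ (m - l) * (real ((m - 1) choose (l - 1))
            / ((real n + real b / real c * real l) gchoose n)) * real l ^ (n + m - 1))"
    using assms urnY_zero_eq_black_sum[of b c m n] black_sum_eq_gchoose[OF r, of 1 n m 0]
    by (simp add: power_divide mult.assoc)
  show ?thesis
    using black_form white_form zero_form by auto
qed

end
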